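(* Let $G$ be a group acting transitively on a set $X$. Then $\mathrm{Con}(G\curvearrowright X)\subseteq\mathrm{Con}(G)$.
   Context: For an action $G\curvearrowright X$, an ordered tuple $\mathfrak{g}=(g_1,\dots,g_n)$ of elements of $G$ and a finite partition $\mathcal{E}=\{E_1,\dots,E_m\}$ of $X$ (a configuration pair), a configuration is a tuple $C=(C_0,\dots,C_n)\in\{1,\dots,m\}^{n+1}$ such that some $x\in E_{C_0}$ satisfies $g_i\cdot x\in E_{C_i}$ for $i=1,\dots,n$; the set of these is $\mathrm{Con}(\mathfrak{g},\mathcal{E};X)$. Then $\mathrm{Con}(G\curvearrowright X)=\{\mathrm{Con}(\mathfrak{g},\mathcal{E};X): (\mathfrak{g},\mathcal{E})\text{ a configuration pair}\}$. $\mathrm{Con}(G)$ denotes $\mathrm{Con}(G\curvearrowright G)$ for the action of $G$ on itself by left multiplication. *)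

theory Defs
  imports "HOL-Algebra.Group_Action"
begin

definition is_partition :: "'x set \<Rightarrow> nat \<Rightarrow> (nat \<Rightarrow> 'x set) \<Rightarrow> bool" where
  "is_partition X m E \<longleftrightarrow>
     (\<forall>i\<in>{1..m}. E i \<noteq> {} \<and> E i \<subseteq> X) \<and>
     (\<forall>i\<in>{1..m}. \<forall>j\<in>{1..m}. i \<noteq> j \<longrightarrow> E i \<inter> E j = {}) \<and>
     (\<Union>i\<in>{1..m}. E i) = X"

text \<open>\<open>Con(g, E; X)\<close> for the action \<open>act\<close>: tuples \<open>(C_0,...,C_n)\<close> (lists of length
  \<open>n+1\<close>, \<open>n = length gs\<close>) with entries in \<open>{1..m}\<close>, such that some \<open>x \<in> E_{C_0}\<close>
  has \<open>g_i \<cdot> x \<in> E_{C_i}\<close> for \<open>i = 1..n\<close> (with \<open>g_i = gs ! (i-1)\<close>).\<close>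
definition Con_pair :: "('g \<Rightarrow> 'x \<Rightarrow> 'x) \<Rightarrow> 'g list \<Rightarrow> nat \<Rightarrow> (nat \<Rightarrow> 'x set) \<Rightarrow> nat list set" where
  "Con_pair act gs m E =
     {C. length C = length gs + 1 \<and> set C \<subseteq> {1..m} \<and>
         (\<exists>x \<in> E (C ! 0). \<forall>i\<in>{1..length gs}. act (gs ! (i - 1)) x \<in> E (C ! i))}"

definition Con_action :: "('g, 'b) monoid_scheme \<Rightarrow> 'x set \<Rightarrow> ('g \<Rightarrow> 'x \<Rightarrow> 'x) \<Rightarrow> nat list set set" where
  "Con_action G X act =
     {Con_pair act gs m E | gs m E. set gs \<subseteq> carrier G \<and> is_partition X m E}"

definition Con_group :: "('g, 'b) monoid_scheme \<Rightarrow> nat list set set" where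
  "Con_group G = Con_action G (carrier G) (\<lambda>g x. g \<otimes>\<^bsub>G\<^esub> x)"

end

theory Submission
  imports Defs
begin

text \<open>Fix a point \<open>x\<^sub>0 \<in> X\<close>. By transitivity the orbit map \<open>h \<mapsto> h \<cdot> x\<^sub>0\<close> maps \<open>G\<close> onto \<open>X\<close>,
  and it intertwines left multiplication on \<open>G\<close> with the action on \<open>X\<close>. Pulling a partition
  of \<open>X\<close> back along this map gives a partition of \<open>G\<close> with exactly the same configurations.\<close>

lemma is_partition_vimage:
  assumes "is_partition B m E" and "f ` A = B"
  shows "is_partition A m (\<lambda>i. A \<inter> f -` E i)"
  using assms unfolding is_partition_def by (auto 0 3 simp: disjoint_iff)

lemma Con_pair_vimage:
  assumes onto: "\<And>i. i \<in> {1..m} \<Longrightarrow> E i \<subseteq> f ` A"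
    and closed: "\<And>g a. g \<in> set gs \<Longrightarrow> a \<in> A \<Longrightarrow> act\<^sub>A g a \<in> A"
    and equivariant: "\<And>g a. g \<in> set gs \<Longrightarrow> a \<in> A \<Longrightarrow> f (act\<^sub>A g a) = act\<^sub>B g (f a)"
  shows "Con_pair act\<^sub>B gs m E = Con_pair act\<^sub>A gs m (\<lambda>i. A \<inter> f -` E i)"
proof -
  have gs_nth: "gs ! (i - 1) \<in> set gs" if "i \<in> {1..length gs}" for i
    using that by (auto intro: nth_mem)
  have "(\<exists>x\<in>E (C ! 0). \<forall>i\<in>{1..length gs}. act\<^sub>B (gs ! (i - 1)) x \<in> E (C ! i)) \<longleftrightarrow>
        (\<exists>a\<in>A \<inter> f -` E (C ! 0). \<forall>i\<in>{1..length gs}. act\<^sub>A (gs ! (i - 1)) a \<in> A \<inter> f -` E (C ! i))"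
    if "length C = length gs + 1" and "set C \<subseteq> {1..m}" for C
  proof
    assume "\<exists>x\<in>E (C ! 0). \<forall>i\<in>{1..length gs}. act\<^sub>B (gs ! (i - 1)) x \<in> E (C ! i)"
    then obtain x where x: "x \<in> E (C ! 0)"
      and moves: "\<forall>i\<in>{1..length gs}. act\<^sub>B (gs ! (i - 1)) x \<in> E (C ! i)" by blast
    have "C ! 0 \<in> {1..m}"
      using that by (metis add_gr_0 nth_mem subsetD zero_less_one)
    then obtain a where "a \<in> A" "x = f a"
      using onto x by blast
    then show "\<exists>a\<in>A \<inter> f -` E (C ! 0). \<forall>i\<in>{1..length gs}. act\<^sub>A (gs ! (i - 1)) a \<in> A \<inter> f -` E (C ! i)"
      using x moves gs_nth closed equivariant by auto
  next
    assume "\<exists>a\<in>A \<inter> f -` E (C ! 0). \<forall>i\<in>{1..length gs}. act\<^sub>A (gs ! (i - 1)) a \<in> A \<inter> f -` E (C ! i)"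
    then show "\<exists>x\<in>E (C ! 0). \<forall>i\<in>{1..length gs}. act\<^sub>B (gs ! (i - 1)) x \<in> E (C ! i)"
      using gs_nth equivariant by (metis IntE vimageE)
  qed
  then show ?thesis
    unfolding Con_pair_def by blast
qed

lemma (in transitive_action) orbit_map_onto:
  assumes "x \<in> E"
  shows "(\<lambda>h. \<phi> h x) ` carrier G = E"
  using assms unique_orbit element_image by blast

theorem mainTheorem5:
  fixes G (structure) and X :: "'x set" and \<phi> :: "'g \<Rightarrow> 'x \<Rightarrow> 'x"
  assumes "transitive_action G X \<phi>" and "X \<noteq> {}"
  shows "Con_action G X \<phi> \<subseteq> Con_group G"
proof
  interpret transitive_action G X \<phi> by (rule assms(1))
  interpret group G using group_hom group_hom.axioms(1) by blast
  obtain x\<^sub>0 where x\<^sub>0: "x\<^sub>0 \<in> X" using assms(2) by blast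
  let ?orbit_map = "\<lambda>h. \<phi> h x\<^sub>0"
  fix S assume "S \<in> Con_action G X \<phi>"
  then obtain gs m E where S: "S = Con_pair \<phi> gs m E" and gs: "set gs \<subseteq> carrier G"
    and partition: "is_partition X m E" unfolding Con_action_def by blast
  have onto: "?orbit_map ` carrier G = X"
    using orbit_map_onto[OF x\<^sub>0] .
  have "S = Con_pair (\<lambda>g h. g \<otimes> h) gs m (\<lambda>i. carrier G \<inter> ?orbit_map -` E i)"
    unfolding S
  proof (rule Con_pair_vimage)
    show "E i \<subseteq> ?orbit_map ` carrier G" if "i \<in> {1..m}" for i
      using partition that onto unfolding is_partition_def by blast
  qed (use gs x\<^sub>0 composition_rule in auto)
  moreover have "is_partition (carrier G) m (\<lambda>i. carrier G \<inter> ?orbit_map -` E i)"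
    using is_partition_vimage[OF partition onto] .
  ultimately show "S \<in> Con_group G"
    unfolding Con_group_def Con_action_def using gs by blast
qed

end
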